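(* Let $(M,g)$ be a four-dimensional spacetime with signature $(+,-,-,-)$ and let $X_{abcd}$ be an arbitrary $(2,2)$ double form at a point. Decompose $X=\sum_{i=1}^{6}{}^{(i)}X$ as follows: $S_{abcd}=\tfrac12(X_{abcd}+X_{cdab})$, $A_{abcd}=\tfrac12(X_{abcd}-X_{cdab})$; ${}^{(4)}X_{abcd}=\tfrac1{24}\sum_{\pi}\mathrm{sgn}(\pi)X_{\pi(abcd)}$ (total antisymmetrization over the four indices); ${}^{(c)}X=S-{}^{(4)}X$; with $X_{ac}=g^{bd}X_{abcd}$, $X=g^{ac}X_{ac}$, ${}^{(3)}X_{abcd}=\tfrac{X}{12}(g_{ac}g_{bd}-g_{ad}g_{bc})$; with $h_{ab}$ the traceless part $h_{ab}=c_{ab}-\tfrac14 c\,g_{ab}$ of the first trace $c_{ab}=g^{bd}\,{}^{(c)}X_{abcd}$, ${}^{(2)}X_{abcd}=\tfrac12(g_{ac}h_{bd}-g_{ad}h_{bc}+g_{bd}h_{ac}-g_{bc}h_{ad})$; ${}^{(1)}X={}^{(c)}X-{}^{(2)}X-{}^{(3)}X$; with $k_{ac}=g^{bd}A_{abcd}$, ${}^{(6)}X_{abcd}=\tfrac12(g_{ac}k_{bd}-g_{ad}k_{bc}+g_{bd}k_{ac}-g_{bc}k_{ad})$; ${}^{(5)}X=A-{}^{(6)}X$. Then, with $\overleftrightarrow{\star}Y_{abcd}=\tfrac14\varepsilon_{ab}{}^{pq}\varepsilon_{cd}{}^{rs}Y_{pqrs}$, $$\overleftrightarrow{\star}\,{}^{(1)}X=-{}^{(1)}X,\quad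 \overleftrightarrow{\star}\,{}^{(2)}X=+{}^{(2)}X,\quad \overleftrightarrow{\star}\,{}^{(3)}X=-{}^{(3)}X,$$ $$\overleftrightarrow{\star}\,{}^{(4)}X=-{}^{(4)}X,\quad \overleftrightarrow{\star}\,{}^{(5)}X=+{}^{(5)}X,\quad \overleftrightarrow{\star}\,{}^{(6)}X=-{}^{(6)}X.$$
   Context: A $(2,2)$ double form is a covariant 4-tensor with $X_{abcd}=-X_{bacd}=-X_{abdc}$. The Levi-Civita tensors are $\varepsilon_{abcd}=\sqrt{-\det g}\,[abcd]$, $\varepsilon^{abcd}=-[abcd]/\sqrt{-\det g}$ with $[0123]=+1$, so that $\varepsilon^{a_1\dots a_4}\varepsilon_{b_1\dots b_4}=-\delta^{a_1\dots a_4}_{b_1\dots b_4}$ (generalized Kronecker delta). The pieces ${}^{(i)}X$ are the six irreducible components of $X$ under the pseudo-orthogonal group: ${}^{(1)}X$ is symmetric, satisfies the cyclic identity and is traceless; ${}^{(2)}X,{}^{(3)}X$ are Kulkarni–Nomizu products of the metric with the traceless first trace and with a multiple of the metric; ${}^{(4)}X$ is a 4-form; ${}^{(5)}X$ is antisymmetric (under $ab\leftrightarrow cd$) and traceless; ${}^{(6)}X$ is the antisymmetric Kulkarni–Nomizu piece. *)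

theory Defs
  imports "HOL-Analysis.Analysis"
begin

text \<open>Tensors at a point of a 4-dimensional spacetime, components w.r.t. an
arbitrary basis; indices range over the 4-element type 4 (values 0,1,2,3).\<close>

type_synonym tensor4 = "4 \<Rightarrow> 4 \<Rightarrow> 4 \<Rightarrow> 4 \<Rightarrow> real"
type_synonym tensor2 = "4 \<Rightarrow> 4 \<Rightarrow> real"

definition minkowski :: "real^4^4" where
  "minkowski = (\<chi> i j. if i = j then (if i = 0 then 1 else -1) else 0)"

definition lorentzian :: "real^4^4 \<Rightarrow> bool" where
  "lorentzian g \<longleftrightarrow> transpose g = g \<and>
     (\<exists>P::real^4^4. invertible P \<and> transpose P ** g ** P = minkowski)"

definition double_form :: "tensor4 \<Rightarrow> bool" where
  "double_form X \<longleftrightarrow> (\<forall>a b c d. X a b c d = - X b a c d \<and> X a b c d = - X a b d c)"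

definition slots :: "4 \<Rightarrow> 4 \<Rightarrow> 4 \<Rightarrow> 4 \<Rightarrow> 4 \<Rightarrow> 4" where
  "slots a b c d = (\<lambda>i. if i = 0 then a else if i = 1 then b else if i = 2 then c else d)"

definition levi_symbol :: "4 \<Rightarrow> 4 \<Rightarrow> 4 \<Rightarrow> 4 \<Rightarrow> real" where
  "levi_symbol a b c d = (if bij (slots a b c d) then of_int (sign (slots a b c d)) else 0)"

definition ginv :: "real^4^4 \<Rightarrow> tensor2" where
  "ginv g a b = matrix_inv g $ a $ b"

definition eps_low :: "real^4^4 \<Rightarrow> tensor4" where
  "eps_low g a b c d = sqrt (- det g) * levi_symbol a b c d"

definition eps_mixed :: "real^4^4 \<Rightarrow> tensor4" where
  "eps_mixed g a b p q = (\<Sum>r\<in>UNIV. \<Sum>s\<in>UNIV. eps_low g a b r s * ginv g r p * ginv g s q)"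

definition double_dual :: "real^4^4 \<Rightarrow> tensor4 \<Rightarrow> tensor4" where
  "double_dual g Y a b c d = (1/4) * (\<Sum>p\<in>UNIV. \<Sum>q\<in>UNIV. \<Sum>r\<in>UNIV. \<Sum>s\<in>UNIV.
      eps_mixed g a b p q * eps_mixed g c d r s * Y p q r s)"

definition sym_part :: "tensor4 \<Rightarrow> tensor4" where
  "sym_part X a b c d = (1/2) * (X a b c d + X c d a b)"

definition antisym_part :: "tensor4 \<Rightarrow> tensor4" where
  "antisym_part X a b c d = (1/2) * (X a b c d - X c d a b)"

definition trace1 :: "real^4^4 \<Rightarrow> tensor4 \<Rightarrow> tensor2" where
  "trace1 g X a c = (\<Sum>b\<in>UNIV. \<Sum>d\<in>UNIV. ginv g b d * X a b c d)"

definition trace2 :: "real^4^4 \<Rightarrow> tensor2 \<Rightarrow> real" where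
  "trace2 g T = (\<Sum>a\<in>UNIV. \<Sum>c\<in>UNIV. ginv g a c * T a c)"

definition kn :: "real^4^4 \<Rightarrow> tensor2 \<Rightarrow> tensor4" where
  "kn g h a b c d = (1/2) * (g$a$c * h b d - g$a$d * h b c + g$b$d * h a c - g$b$c * h a d)"

definition piece4 :: "tensor4 \<Rightarrow> tensor4" where
  "piece4 X a b c d = (1/24) * (\<Sum>\<pi>\<in>{\<pi>. \<pi> permutes (UNIV :: 4 set)}.
      of_int (sign \<pi>) * X (slots a b c d (\<pi> 0)) (slots a b c d (\<pi> 1))
                          (slots a b c d (\<pi> 2)) (slots a b c d (\<pi> 3)))"

definition pieceC :: "tensor4 \<Rightarrow> tensor4" where
  "pieceC X a b c d = sym_part X a b c d - piece4 X a b c d"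

definition piece3 :: "real^4^4 \<Rightarrow> tensor4 \<Rightarrow> tensor4" where
  "piece3 g X a b c d = trace2 g (trace1 g X) / 12 * (g$a$c * g$b$d - g$a$d * g$b$c)"

definition traceless_h :: "real^4^4 \<Rightarrow> tensor4 \<Rightarrow> tensor2" where
  "traceless_h g X a b = trace1 g (pieceC X) a b
      - (1/4) * trace2 g (trace1 g (pieceC X)) * g$a$b"

definition piece2 :: "real^4^4 \<Rightarrow> tensor4 \<Rightarrow> tensor4" where
  "piece2 g X = kn g (traceless_h g X)"

definition piece1 :: "real^4^4 \<Rightarrow> tensor4 \<Rightarrow> tensor4" where
  "piece1 g X a b c d = pieceC X a b c d - piece2 g X a b c d - piece3 g X a b c d"

definition piece6 :: "real^4^4 \<Rightarrow> tensor4 \<Rightarrow> tensor4" where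
  "piece6 g X = kn g (trace1 g (antisym_part X))"

definition piece5 :: "real^4^4 \<Rightarrow> tensor4 \<Rightarrow> tensor4" where
  "piece5 g X a b c d = antisym_part X a b c d - piece6 g X a b c d"

end

theory Submission
  imports Defs
begin

(* Contracting two Levi-Civita tensors gives minus a generalised Kronecker delta: here
   eps_ab^pq eps_cd^rs = - det (R g R'^T), where R has rows e_a, e_b, g^p., g^q. and R' has
   rows e_c, e_d, g^r., g^s.; the sign is that of det g < 0.
   Expanding this 4x4 determinant and using that a double form Y is antisymmetric in each
   index pair gives, with Ric the first trace of Y and s its full trace,

     double dual of Y at abcd = - Y_cdab + 2 kn(g, Ric^T)_abcd - s/2 (g_ac g_bd - g_ad g_bc).

   So a trace-free double form Z has double dual - Z_cdab, which is -Z for the pair-symmetric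
   pieces 1 and 4 and +Z for the pair-antisymmetric piece 5.  For Z = kn(g, h) the formula
   gives kn(g, h^T) - tr(h)/2 (g_ac g_bd - g_ad g_bc): this is +Z for the symmetric trace-free
   h of piece 2, -Z for h a multiple of g (piece 3) and -Z for the antisymmetric k of piece 6. *)

section \<open>The Levi-Civita symbol\<close>

lemma cases_4: "(x::4) = 0 \<or> x = 1 \<or> x = 2 \<or> x = 3"
proof -
  have "(4::4) = 0" by simp
  then show ?thesis using exhaust_4[of x] by metis
qed

lemma UNIV_4_eq: "(UNIV::4 set) = {0, 1, 2, 3}"
  using cases_4 by auto

lemma sum_UNIV_4: "sum f (UNIV::4 set) = f 0 + f 1 + f 2 + f 3"
  unfolding UNIV_4_eq by (simp add: ac_simps)

lemma fun_eq_iff_4: "(f :: 4 \<Rightarrow> 'a) = h \<longleftrightarrow> f 0 = h 0 \<and> f 1 = h 1 \<and> f 2 = h 2 \<and> f 3 = h 3"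
proof
  assume eqs: "f 0 = h 0 \<and> f 1 = h 1 \<and> f 2 = h 2 \<and> f 3 = h 3"
  show "f = h"
  proof
    fix x :: 4
    show "f x = h x"
      using cases_4[of x] eqs by auto
  qed
qed simp

definition perm_sign :: "('a::finite \<Rightarrow> 'a) \<Rightarrow> real" where
  "perm_sign f = (if bij f then of_int (sign f) else 0)"

lemma perm_sign_compose:
  fixes f s :: "'a::finite \<Rightarrow> 'a"
  assumes "bij s"
  shows "perm_sign (f \<circ> s) = of_int (sign s) * perm_sign f"
proof (cases "bij f")
  case True
  then show ?thesis
    using assms by (simp add: perm_sign_def bij_comp sign_compose permutation)
next
  case False
  have "\<not> bij (f \<circ> s)"
    using False bij_betw_comp_iff[OF assms, of f UNIV] by simp
  then show ?thesis
    using False by (simp add: perm_sign_def)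
qed

lemma perm_sign_eq_0: "f i = f j \<Longrightarrow> i \<noteq> j \<Longrightarrow> perm_sign f = 0"
  by (auto simp: perm_sign_def bij_def inj_def)

lemma levi_symbol_perm_sign: "levi_symbol a b c d = perm_sign (slots a b c d)"
  by (simp add: levi_symbol_def perm_sign_def)

lemma slots_transpose:
  "slots b a c d = slots a b c d \<circ> Transposition.transpose 0 1"
  "slots a c b d = slots a b c d \<circ> Transposition.transpose 1 2"
  "slots a b d c = slots a b c d \<circ> Transposition.transpose 2 3"
  "slots a d c b = slots a b c d \<circ> Transposition.transpose 1 3"
  "slots c d a b = slots a b c d \<circ> Transposition.transpose 0 2 \<circ> Transposition.transpose 1 3"
  by (simp_all add: fun_eq_iff_4 slots_def)

lemma levi_symbol_swap_ab: "levi_symbol b a c d = - levi_symbol a b c d"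
  unfolding levi_symbol_perm_sign slots_transpose(1)[where a=a and b=b and c=c and d=d]
  by (simp add: perm_sign_compose sign_swap_id)

lemma levi_symbol_swap_bc: "levi_symbol a c b d = - levi_symbol a b c d"
  unfolding levi_symbol_perm_sign slots_transpose(2)[where a=a and b=b and c=c and d=d]
  by (simp add: perm_sign_compose sign_swap_id)

lemma levi_symbol_swap_cd: "levi_symbol a b d c = - levi_symbol a b c d"
  unfolding levi_symbol_perm_sign slots_transpose(3)[where a=a and b=b and c=c and d=d]
  by (simp add: perm_sign_compose sign_swap_id)

lemma levi_symbol_0123: "levi_symbol 0 1 2 3 = 1"
proof -
  have "slots 0 1 2 3 = id"
    by (simp add: fun_eq_iff_4 slots_def)
  then show ?thesis
    by (simp add: levi_symbol_perm_sign perm_sign_def)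
qed

lemma levi_symbol_repeated:
  "levi_symbol a a c d = 0" "levi_symbol a b b d = 0" "levi_symbol a b c c = 0"
  "levi_symbol a b a d = 0" "levi_symbol a b c b = 0" "levi_symbol a b c a = 0"
  unfolding levi_symbol_perm_sign
  by (rule perm_sign_eq_0[of _ 0 1] perm_sign_eq_0[of _ 1 2] perm_sign_eq_0[of _ 2 3]
      perm_sign_eq_0[of _ 0 2] perm_sign_eq_0[of _ 1 3] perm_sign_eq_0[of _ 0 3];
      simp add: slots_def)+

(* The swap rules, instantiated so that they sort numeral arguments: together with
   levi_symbol_0123 and levi_symbol_repeated they let simp evaluate the symbol. *)
lemmas levi_symbol_eval =
  levi_symbol_swap_ab[where a=0 and b=1] levi_symbol_swap_bc[where b=0 and c=1]
  levi_symbol_swap_cd[where c=0 and d=1] levi_symbol_swap_ab[where a=0 and b=2]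
  levi_symbol_swap_bc[where b=0 and c=2] levi_symbol_swap_cd[where c=0 and d=2]
  levi_symbol_swap_ab[where a=0 and b=3] levi_symbol_swap_bc[where b=0 and c=3]
  levi_symbol_swap_cd[where c=0 and d=3] levi_symbol_swap_ab[where a=1 and b=2]
  levi_symbol_swap_bc[where b=1 and c=2] levi_symbol_swap_cd[where c=1 and d=2]
  levi_symbol_swap_ab[where a=1 and b=3] levi_symbol_swap_bc[where b=1 and c=3]
  levi_symbol_swap_cd[where c=1 and d=3] levi_symbol_swap_ab[where a=2 and b=3]
  levi_symbol_swap_bc[where b=2 and c=3] levi_symbol_swap_cd[where c=2 and d=3]
  levi_symbol_repeated levi_symbol_0123

lemma det_4_levi_symbol:
  "det (A::real^4^4) = (\<Sum>i\<in>UNIV. \<Sum>j\<in>UNIV. \<Sum>k\<in>UNIV. \<Sum>l\<in>UNIV.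
     levi_symbol i j k l * A$0$i * A$1$j * A$2$k * A$3$l)"
proof -
  have expand_0: "finite {1::4, 2, 3}" "0 \<notin> {1::4, 2, 3}"
    and expand_1: "finite {2::4, 3}" "1 \<notin> {2::4, 3}"
    and expand_2: "finite {3::4}" "2 \<notin> {3::4}"
    by auto
  show ?thesis
    unfolding det_def UNIV_4_eq permutes_sing
      sum_over_permutations_insert[OF expand_0] sum_over_permutations_insert[OF expand_1]
      sum_over_permutations_insert[OF expand_2]
    by (simp add: sign_swap_id permutation_swap_id permutation_compose sign_compose
        swap_id_eq levi_symbol_eval algebra_simps)
qed

lemma det_minkowski: "det minkowski = -1"
  by (simp add: det_4_levi_symbol minkowski_def sum_UNIV_4 levi_symbol_eval)

definition kdelta :: "'a \<Rightarrow> 'a \<Rightarrow> real" where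
  "kdelta a b = (if a = b then 1 else 0)"

lemma if_zero_mult:
  "(if P then x else 0) * y = (if P then x * y else (0::real))"
  "y * (if P then x else 0) = (if P then y * x else (0::real))"
  by simp_all

lemma sum_if_zero: "(\<Sum>x\<in>A. if P then f x else 0) = (if P then sum f A else (0::real))"
  by simp

lemmas kdelta_simps = kdelta_def if_zero_mult sum_if_zero

section \<open>Lorentzian metrics\<close>

locale lorentz_metric =
  fixes g :: "real^4^4"
  assumes lorentzian: "lorentzian g"
begin

lemma metric_transpose: "transpose g = g"
  using lorentzian unfolding lorentzian_def by blast

lemma metric_sym: "g$a$b = g$b$a"
  using arg_cong[OF metric_transpose, of "\<lambda>M. M$b$a"] by (simp add: transpose_def)

lemma det_metric_neg: "det g < 0"
proof -
  obtain P :: "real^4^4" where "transpose P ** g ** P = minkowski"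
    using lorentzian unfolding lorentzian_def by blast
  then have "det (transpose P ** g ** P) = -1"
    using det_minkowski by simp
  then have "(det P * det P) * det g = -1"
    by (simp add: det_mul det_transpose algebra_simps)
  moreover have "det P * det P \<ge> 0"
    by simp
  ultimately show ?thesis
    using mult_nonneg_nonneg[of "det P * det P" "det g"] by linarith
qed

lemma metric_mult_ginv: "g ** matrix_inv g = mat 1 \<and> matrix_inv g ** g = mat 1"
proof -
  have "invertible g"
    using det_metric_neg by (simp add: invertible_det_nz)
  then show ?thesis
    unfolding invertible_def matrix_inv_def by (rule someI_ex)
qed

lemma ginv_sym: "ginv g a b = ginv g b a"
proof -
  let ?h = "matrix_inv g"
  have "g ** transpose ?h = mat 1"
    using arg_cong[OF conjunct2[OF metric_mult_ginv], of transpose]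
    by (simp add: matrix_transpose_mul metric_transpose)
  then have "transpose ?h = (?h ** g) ** transpose ?h"
    using metric_mult_ginv by (simp add: matrix_mul_assoc)
  also have "\<dots> = ?h"
    using \<open>g ** transpose ?h = mat 1\<close> by (simp add: matrix_mul_assoc[symmetric])
  finally have "transpose ?h = ?h" .
  moreover have "transpose ?h $ b $ a = ?h $ a $ b"
    by (simp add: transpose_def)
  ultimately show ?thesis
    by (simp add: ginv_def)
qed

lemma sum_metric_ginv: "(\<Sum>k\<in>UNIV. g$a$k * ginv g k b) = kdelta a b"
  using arg_cong[OF conjunct1[OF metric_mult_ginv], of "\<lambda>M. M$a$b"]
  by (simp add: matrix_matrix_mult_def mat_def ginv_def kdelta_def)

lemma sum_ginv_metric: "(\<Sum>k\<in>UNIV. ginv g a k * g$k$b) = kdelta a b"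
  using arg_cong[OF conjunct2[OF metric_mult_ginv], of "\<lambda>M. M$a$b"]
  by (simp add: matrix_matrix_mult_def mat_def ginv_def kdelta_def)

end

section \<open>Contracting two Levi-Civita tensors\<close>

definition raised_rows :: "real^4^4 \<Rightarrow> 4 \<Rightarrow> 4 \<Rightarrow> 4 \<Rightarrow> 4 \<Rightarrow> real^4^4" where
  "raised_rows g a b p q = (\<chi> i j.
     if i = 0 then kdelta a j else if i = 1 then kdelta b j else if i = 2 then ginv g p j
     else ginv g q j)"

(* Rows are indexed by a, b, p, q and columns by c, d, r, s; the determinant is the generalised
   Kronecker delta with every index in the position it has in eps_ab^pq eps_cd^rs. *)
definition mixed_delta_matrix :: "real^4^4 \<Rightarrow> 4 \<Rightarrow> 4 \<Rightarrow> 4 \<Rightarrow> 4 \<Rightarrow> 4 \<Rightarrow> 4 \<Rightarrow> 4 \<Rightarrow> 4 \<Rightarrow> real^4^4" where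
  "mixed_delta_matrix g a b c d p q r s = (\<chi> i j.
     if i = 0 then (if j = 0 then g$a$c else if j = 1 then g$a$d
                    else if j = 2 then kdelta a r else kdelta a s)
     else if i = 1 then (if j = 0 then g$b$c else if j = 1 then g$b$d
                         else if j = 2 then kdelta b r else kdelta b s)
     else if i = 2 then (if j = 0 then kdelta p c else if j = 1 then kdelta p d
                         else if j = 2 then ginv g p r else ginv g p s)
     else (if j = 0 then kdelta q c else if j = 1 then kdelta q d
           else if j = 2 then ginv g q r else ginv g q s))"

lemma det_raised_rows:
  "det (raised_rows g a b p q) = (\<Sum>k\<in>UNIV. \<Sum>l\<in>UNIV. levi_symbol a b k l * ginv g p k * ginv g q l)"
  by (simp add: det_4_levi_symbol raised_rows_def kdelta_simps)

context lorentz_metric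
begin

lemma eps_mixed_eq_det: "eps_mixed g a b p q = sqrt (- det g) * det (raised_rows g a b p q)"
  unfolding det_raised_rows eps_mixed_def eps_low_def
  by (simp add: sum_distrib_left mult_ac ginv_sym[of _ p] ginv_sym[of _ q])

lemma raised_rows_metric_product:
  "raised_rows g a b p q ** g ** transpose (raised_rows g c d r s) = mixed_delta_matrix g a b c d p q r s"
proof -
  have lower_lower: "(\<Sum>k\<in>UNIV. (\<Sum>l\<in>UNIV. kdelta x l * g$l$k) * kdelta y k) = g$x$y"
    and lower_upper: "(\<Sum>k\<in>UNIV. (\<Sum>l\<in>UNIV. kdelta x l * g$l$k) * ginv g y k) = kdelta x y"
    and upper_lower: "(\<Sum>k\<in>UNIV. (\<Sum>l\<in>UNIV. ginv g x l * g$l$k) * kdelta y k) = kdelta x y"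
    and upper_upper: "(\<Sum>k\<in>UNIV. (\<Sum>l\<in>UNIV. ginv g x l * g$l$k) * ginv g y k) = ginv g x y"
    for x y
    using sum_metric_ginv[of x y]
    by (simp_all add: kdelta_simps sum_ginv_metric ginv_sym[of y])
  have "(raised_rows g a b p q ** g ** transpose (raised_rows g c d r s))$i$j
      = mixed_delta_matrix g a b c d p q r s $i$j" for i j
    using cases_4[of i] cases_4[of j]
    by (auto simp: matrix_matrix_mult_def transpose_def raised_rows_def mixed_delta_matrix_def
        lower_lower lower_upper upper_lower upper_upper)
  then show ?thesis
    by (simp add: vec_eq_iff)
qed

lemma eps_mixed_mult:
  "eps_mixed g a b p q * eps_mixed g c d r s = - det (mixed_delta_matrix g a b c d p q r s)"
proof -
  let ?R = "raised_rows g a b p q" and ?R' = "raised_rows g c d r s"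
  have "sqrt (- det g) * sqrt (- det g) = - det g"
    using det_metric_neg by simp
  moreover have "eps_mixed g a b p q * eps_mixed g c d r s
      = (sqrt (- det g) * sqrt (- det g)) * (det ?R * det ?R')"
    unfolding eps_mixed_eq_det by (simp only: mult_ac)
  ultimately have "eps_mixed g a b p q * eps_mixed g c d r s = - (det ?R * det g * det ?R')"
    by simp
  then show ?thesis
    unfolding raised_rows_metric_product[symmetric] det_mul det_transpose .
qed

end

section \<open>The double dual of a double form\<close>

lemma double_form_intro:
  "(\<And>a b c d. Y b a c d = - Y a b c d) \<Longrightarrow> (\<And>a b c d. Y a b d c = - Y a b c d) \<Longrightarrow> double_form Y"
  unfolding double_form_def by (metis minus_minus)

lemma double_form_swap_first: "double_form Y \<Longrightarrow> Y b a c d = - Y a b c d"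
  unfolding double_form_def by (metis minus_minus)

lemma double_form_swap_second: "double_form Y \<Longrightarrow> Y a b d c = - Y a b c d"
  unfolding double_form_def by (metis minus_minus)

lemma double_form_diff:
  assumes "double_form Y" "double_form Z"
  shows "double_form (\<lambda>a b c d. Y a b c d - Z a b c d)"
proof (rule double_form_intro)
  fix a b c d
  show "Y b a c d - Z b a c d = - (Y a b c d - Z a b c d)"
    using double_form_swap_first[OF assms(1), of b a c d] double_form_swap_first[OF assms(2), of b a c d]
    by simp
  show "Y a b d c - Z a b d c = - (Y a b c d - Z a b c d)"
    using double_form_swap_second[OF assms(1), of a b d c] double_form_swap_second[OF assms(2), of a b d c]
    by simp
qed

lemma double_form_kn: "double_form (kn g h)"
  by (simp add: double_form_def kn_def algebra_simps)

definition contract :: "tensor4 \<Rightarrow> tensor4 \<Rightarrow> real" where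
  "contract K Y = (\<Sum>p\<in>UNIV. \<Sum>q\<in>UNIV. \<Sum>r\<in>UNIV. \<Sum>s\<in>UNIV. K p q r s * Y p q r s)"

lemma contract_add: "contract (\<lambda>p q r s. K p q r s + L p q r s) Y = contract K Y + contract L Y"
  by (simp add: contract_def algebra_simps sum.distrib)

lemma contract_diff: "contract (\<lambda>p q r s. K p q r s - L p q r s) Y = contract K Y - contract L Y"
  by (simp add: contract_def algebra_simps sum_subtractf)

lemma contract_scale: "contract (\<lambda>p q r s. t * K p q r s) Y = t * contract K Y"
  by (simp add: contract_def sum_distrib_left mult.assoc)

lemma contract_neg: "contract (\<lambda>p q r s. - K p q r s) Y = - contract K Y"
  by (simp add: contract_def sum_negf)

lemma contract_swap_first:
  assumes "double_form Y"
  shows "contract (\<lambda>p q r s. K q p r s) Y = - contract K Y"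
proof -
  have "contract (\<lambda>p q r s. K q p r s) Y
      = (\<Sum>q\<in>UNIV. \<Sum>p\<in>UNIV. \<Sum>r\<in>UNIV. \<Sum>s\<in>UNIV. K q p r s * Y p q r s)"
    unfolding contract_def by (rule sum.swap)
  also have "\<dots> = (\<Sum>q\<in>UNIV. \<Sum>p\<in>UNIV. \<Sum>r\<in>UNIV. \<Sum>s\<in>UNIV. - (K q p r s * Y q p r s))"
  proof (intro sum.cong refl)
    fix p q r s
    show "K q p r s * Y p q r s = - (K q p r s * Y q p r s)"
      using double_form_swap_first[OF assms, of q p r s] by simp
  qed
  also have "\<dots> = - contract K Y"
    by (simp add: contract_def sum_negf)
  finally show ?thesis .
qed

lemma contract_swap_second:
  assumes "double_form Y"
  shows "contract (\<lambda>p q r s. K p q s r) Y = - contract K Y"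
proof -
  have "contract (\<lambda>p q r s. K p q s r) Y
      = (\<Sum>p\<in>UNIV. \<Sum>q\<in>UNIV. \<Sum>s\<in>UNIV. \<Sum>r\<in>UNIV. K p q s r * Y p q r s)"
    unfolding contract_def by (rule sum.cong[OF refl], rule sum.cong[OF refl], rule sum.swap)
  also have "\<dots> = (\<Sum>p\<in>UNIV. \<Sum>q\<in>UNIV. \<Sum>s\<in>UNIV. \<Sum>r\<in>UNIV. - (K p q s r * Y p q s r))"
  proof (intro sum.cong refl)
    fix p q r s
    show "K p q s r * Y p q r s = - (K p q s r * Y p q s r)"
      using double_form_swap_second[OF assms, of p q s r] by simp
  qed
  also have "\<dots> = - contract K Y"
    by (simp add: contract_def sum_negf)
  finally show ?thesis .
qed

definition antisym_pairs :: "tensor4 \<Rightarrow> tensor4" where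
  "antisym_pairs K p q r s = K p q r s - K q p r s - K p q s r + K q p s r"

lemma contract_antisym_pairs:
  assumes "double_form Y"
  shows "contract (antisym_pairs K) Y = 4 * contract K Y"
proof -
  have "contract (antisym_pairs K) Y = contract K Y - contract (\<lambda>p q r s. K q p r s) Y
      - contract (\<lambda>p q r s. K p q s r) Y + contract (\<lambda>p q r s. K q p s r) Y"
    unfolding antisym_pairs_def[abs_def] by (simp only: contract_add contract_diff)
  then show ?thesis
    using contract_swap_first[OF assms, of "\<lambda>p q r s. K p q s r"]
      contract_swap_first[OF assms, of K] contract_swap_second[OF assms, of K]
    by simp
qed

lemma contract_eq_if_antisym_pairs_eq:
  "double_form Y \<Longrightarrow> antisym_pairs K = antisym_pairs L \<Longrightarrow> contract K Y = contract L Y"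
  using contract_antisym_pairs[of Y K] contract_antisym_pairs[of Y L] by simp

definition double_dual_kernel :: "real^4^4 \<Rightarrow> 4 \<Rightarrow> 4 \<Rightarrow> 4 \<Rightarrow> 4 \<Rightarrow> tensor4" where
  "double_dual_kernel g a b c d p q r s = - (1/4) * det (mixed_delta_matrix g a b c d p q r s)"

(* Has the same pair antisymmetrisation as double_dual_kernel; each of its three terms
   contracts to one term of double_dual_double_form below. *)
definition reduced_kernel :: "real^4^4 \<Rightarrow> 4 \<Rightarrow> 4 \<Rightarrow> 4 \<Rightarrow> 4 \<Rightarrow> tensor4" where
  "reduced_kernel g a b c d p q r s =
     - (kdelta p c * kdelta q d * kdelta a r * kdelta b s)
     + (g$a$c * (kdelta p d * kdelta b r * ginv g q s)
        - g$a$d * (kdelta p c * kdelta b r * ginv g q s)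
        + g$b$d * (kdelta p c * kdelta a r * ginv g q s)
        - g$b$c * (kdelta p d * kdelta a r * ginv g q s))
     - (g$a$c * g$b$d - g$a$d * g$b$c) / 2 * (ginv g p r * ginv g q s)"

lemma antisym_pairs_double_dual_kernel:
  "antisym_pairs (double_dual_kernel g a b c d) = antisym_pairs (reduced_kernel g a b c d)"
proof (intro ext)
  fix p q r s
  show "antisym_pairs (double_dual_kernel g a b c d) p q r s
      = antisym_pairs (reduced_kernel g a b c d) p q r s"
    unfolding antisym_pairs_def double_dual_kernel_def reduced_kernel_def det_4_levi_symbol
      mixed_delta_matrix_def
    by (simp add: sum_UNIV_4 levi_symbol_eval algebra_simps)
qed

lemma contract_reduced_kernel:
  "contract (reduced_kernel g a b c d) Y = - Y c d a b + 2 * kn g (\<lambda>x y. trace1 g Y y x) a b c d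
     - trace2 g (trace1 g Y) / 2 * (g$a$c * g$b$d - g$a$d * g$b$c)"
proof -
  have deltas: "contract (\<lambda>p q r s. kdelta p c * kdelta q d * kdelta a r * kdelta b s) Y = Y c d a b"
    by (simp add: contract_def kdelta_simps)
  have trace: "contract (\<lambda>p q r s. kdelta p x * kdelta y r * ginv g q s) Y = trace1 g Y x y" for x y
    by (simp add: contract_def trace1_def kdelta_simps)
  have double_trace: "contract (\<lambda>p q r s. ginv g p r * ginv g q s) Y = trace2 g (trace1 g Y)"
    unfolding contract_def trace2_def trace1_def sum_distrib_left mult.assoc
    by (rule sum.cong[OF refl], rule sum.swap)
  show ?thesis
    unfolding reduced_kernel_def
    by (simp only: contract_add contract_diff contract_scale contract_neg deltas trace double_trace)
      (simp add: kn_def field_simps)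
qed

context lorentz_metric
begin

theorem double_dual_double_form:
  assumes "double_form Y"
  shows "double_dual g Y a b c d = - Y c d a b + 2 * kn g (\<lambda>x y. trace1 g Y y x) a b c d
     - trace2 g (trace1 g Y) / 2 * (g$a$c * g$b$d - g$a$d * g$b$c)"
proof -
  have "double_dual g Y a b c d = contract (double_dual_kernel g a b c d) Y"
    unfolding double_dual_def contract_def double_dual_kernel_def
    by (simp add: eps_mixed_mult sum_distrib_left algebra_simps)
  also have "\<dots> = contract (reduced_kernel g a b c d) Y"
    using assms antisym_pairs_double_dual_kernel by (rule contract_eq_if_antisym_pairs_eq)
  finally show ?thesis
    unfolding contract_reduced_kernel .
qed

lemma double_dual_trace_free:
  assumes "double_form Z" and "\<And>x y. trace1 g Z x y = 0"
  shows "double_dual g Z a b c d = - Z c d a b"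
proof -
  have "trace1 g Z = (\<lambda>x y. 0)"
    using assms(2) by (intro ext)
  then show ?thesis
    unfolding double_dual_double_form[OF assms(1)] by (simp add: kn_def trace2_def)
qed

end

section \<open>Traces and Kulkarni-Nomizu products\<close>

lemma trace1_add: "trace1 g (\<lambda>a b c d. Y a b c d + Z a b c d) x y = trace1 g Y x y + trace1 g Z x y"
  by (simp add: trace1_def algebra_simps sum.distrib)

lemma trace1_diff: "trace1 g (\<lambda>a b c d. Y a b c d - Z a b c d) x y = trace1 g Y x y - trace1 g Z x y"
  by (simp add: trace1_def algebra_simps sum_subtractf)

lemma trace1_scale: "trace1 g (\<lambda>a b c d. t * Y a b c d) x y = t * trace1 g Y x y"
  by (simp add: trace1_def sum_distrib_left mult_ac)

lemma trace2_add: "trace2 g (\<lambda>a c. h a c + k a c) = trace2 g h + trace2 g k"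
  by (simp add: trace2_def algebra_simps sum.distrib)

lemma trace2_diff: "trace2 g (\<lambda>a c. h a c - k a c) = trace2 g h - trace2 g k"
  by (simp add: trace2_def algebra_simps sum_subtractf)

lemma trace2_scale: "trace2 g (\<lambda>a c. t * h a c) = t * trace2 g h"
  by (simp add: trace2_def sum_distrib_left mult_ac)

context lorentz_metric
begin

lemma trace1_pair_swap: "trace1 g (\<lambda>a b c d. Y c d a b) x y = trace1 g Y y x"
proof -
  have "trace1 g (\<lambda>a b c d. Y c d a b) x y = (\<Sum>d\<in>UNIV. \<Sum>b\<in>UNIV. ginv g b d * Y y d x b)"
    unfolding trace1_def by (rule sum.swap)
  also have "\<dots> = trace1 g Y y x"
    unfolding trace1_def by (intro sum.cong refl) (metis ginv_sym)
  finally show ?thesis .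
qed

lemma trace1_eq_0_if_antisym_bd:
  assumes "\<And>a b c d. Y a d c b = - Y a b c d"
  shows "trace1 g Y x y = 0"
proof -
  have "trace1 g Y x y = (\<Sum>d\<in>UNIV. \<Sum>b\<in>UNIV. ginv g b d * Y x b y d)"
    unfolding trace1_def by (rule sum.swap)
  also have "\<dots> = (\<Sum>d\<in>UNIV. \<Sum>b\<in>UNIV. - (ginv g d b * Y x d y b))"
    by (intro sum.cong refl) (metis ginv_sym assms mult_minus_right)
  also have "\<dots> = - trace1 g Y x y"
    by (simp add: trace1_def sum_negf)
  finally show ?thesis
    by simp
qed

lemma trace2_transpose: "trace2 g (\<lambda>a c. h c a) = trace2 g h"
proof -
  have "trace2 g (\<lambda>a c. h c a) = (\<Sum>c\<in>UNIV. \<Sum>a\<in>UNIV. ginv g a c * h c a)"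
    unfolding trace2_def by (rule sum.swap)
  also have "\<dots> = trace2 g h"
    unfolding trace2_def by (intro sum.cong refl) (metis ginv_sym)
  finally show ?thesis .
qed

lemma trace2_eq_0_if_antisym:
  assumes "\<And>a c. h c a = - h a c"
  shows "trace2 g h = 0"
proof -
  have "(\<lambda>a c. h c a) = (\<lambda>a c. - h a c)"
    using assms by (intro ext)
  then have "trace2 g h = trace2 g (\<lambda>a c. - h a c)"
    using trace2_transpose[of h] by simp
  also have "\<dots> = - trace2 g h"
    by (simp add: trace2_def sum_negf)
  finally show ?thesis
    by simp
qed

lemma trace2_metric: "trace2 g (\<lambda>a c. g$a$c) = 4"
proof -
  have "trace2 g (\<lambda>a c. g$a$c) = (\<Sum>a\<in>UNIV. \<Sum>c\<in>UNIV. ginv g a c * g$c$a)"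
    unfolding trace2_def by (intro sum.cong refl) (metis metric_sym)
  then show ?thesis
    by (simp add: sum_ginv_metric kdelta_def)
qed

lemma trace1_kn: "trace1 g (kn g h) = (\<lambda>a c. h a c + trace2 g h / 2 * g$a$c)"
proof (intro ext)
  fix a c
  have metric_ginv: "(\<Sum>d\<in>UNIV. g$a$d * ginv g b d) = kdelta a b" for b
    using sum_metric_ginv[of a b] by (simp add: ginv_sym[of b])
  have ginv_metric: "(\<Sum>b\<in>UNIV. ginv g b d * g$b$c) = kdelta d c" for d
    using sum_ginv_metric[of d c] by (simp add: ginv_sym[of _ d])
  have "(\<Sum>b\<in>UNIV. \<Sum>d\<in>UNIV. ginv g b d * (g$a$d * h b c))
      = (\<Sum>b\<in>UNIV. (\<Sum>d\<in>UNIV. g$a$d * ginv g b d) * h b c)"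
    by (simp add: sum_distrib_left sum_distrib_right mult_ac)
  also have "\<dots> = h a c"
    by (simp add: metric_ginv kdelta_simps)
  finally have contract_ad: "(\<Sum>b\<in>UNIV. \<Sum>d\<in>UNIV. ginv g b d * (g$a$d * h b c)) = h a c" .
  have "(\<Sum>b\<in>UNIV. \<Sum>d\<in>UNIV. ginv g b d * (g$b$c * h a d))
      = (\<Sum>d\<in>UNIV. (\<Sum>b\<in>UNIV. ginv g b d * g$b$c) * h a d)"
    by (subst sum.swap) (simp add: sum_distrib_left sum_distrib_right mult_ac)
  also have "\<dots> = h a c"
    by (simp add: ginv_metric kdelta_simps)
  finally have contract_bc: "(\<Sum>b\<in>UNIV. \<Sum>d\<in>UNIV. ginv g b d * (g$b$c * h a d)) = h a c" .
  have contract_bd: "(\<Sum>b\<in>UNIV. \<Sum>d\<in>UNIV. ginv g b d * g$b$d) = 4"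
    using trace2_metric by (simp add: trace2_def)
  have "trace1 g (kn g h) a c = (g$a$c * trace2 g h
      - (\<Sum>b\<in>UNIV. \<Sum>d\<in>UNIV. ginv g b d * (g$a$d * h b c))
      + h a c * (\<Sum>b\<in>UNIV. \<Sum>d\<in>UNIV. ginv g b d * g$b$d)
      - (\<Sum>b\<in>UNIV. \<Sum>d\<in>UNIV. ginv g b d * (g$b$c * h a d))) / 2"
    by (simp add: trace1_def trace2_def kn_def sum_distrib_left sum.distrib sum_subtractf
        algebra_simps)
  then show "trace1 g (kn g h) a c = h a c + trace2 g h / 2 * g$a$c"
    unfolding contract_ad contract_bd contract_bc by (simp add: field_simps)
qed

lemma trace2_trace1_kn: "trace2 g (trace1 g (kn g h)) = 3 * trace2 g h"
proof -
  have "trace2 g (trace1 g (kn g h)) = trace2 g h + trace2 g h / 2 * trace2 g (\<lambda>a c. g$a$c)"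
    unfolding trace1_kn by (simp only: trace2_add trace2_scale)
  then show ?thesis
    by (simp add: trace2_metric)
qed

lemma kn_pair_swap: "kn g h c d a b = kn g (\<lambda>x y. h y x) a b c d"
  by (simp add: kn_def metric_sym[of c a] metric_sym[of c b] metric_sym[of d a] metric_sym[of d b]
      algebra_simps)

lemma double_dual_kn:
  "double_dual g (kn g h) a b c d
     = kn g (\<lambda>x y. h y x) a b c d - trace2 g h / 2 * (g$a$c * g$b$d - g$a$d * g$b$c)"
  unfolding double_dual_double_form[OF double_form_kn] trace2_trace1_kn
  unfolding trace1_kn by (simp add: kn_def algebra_simps metric_sym[of c a] metric_sym[of c b]
      metric_sym[of d a] metric_sym[of d b])

end

section \<open>The six pieces\<close>

definition alternation :: "tensor4 \<Rightarrow> (4 \<Rightarrow> 4) \<Rightarrow> real" where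
  "alternation X v = (1/24) * (\<Sum>\<pi>\<in>{\<pi>. \<pi> permutes (UNIV :: 4 set)}.
      of_int (sign \<pi>) * X (v (\<pi> 0)) (v (\<pi> 1)) (v (\<pi> 2)) (v (\<pi> 3)))"

lemma piece4_eq_alternation: "piece4 X a b c d = alternation X (slots a b c d)"
  by (simp add: piece4_def alternation_def)

lemma alternation_compose:
  assumes t: "t permutes (UNIV :: 4 set)"
  shows "alternation X (v \<circ> t) = of_int (sign t) * alternation X v"
proof -
  let ?P = "{\<pi>. \<pi> permutes (UNIV :: 4 set)}"
  have "alternation X v = (1/24) * (\<Sum>\<pi>\<in>?P. of_int (sign (t \<circ> \<pi>))
      * X (v ((t \<circ> \<pi>) 0)) (v ((t \<circ> \<pi>) 1)) (v ((t \<circ> \<pi>) 2)) (v ((t \<circ> \<pi>) 3)))"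
    unfolding alternation_def by (subst setum_permutations_compose_left[OF t]) (rule refl)
  also have "\<dots> = (1/24) * (\<Sum>\<pi>\<in>?P. of_int (sign t)
      * (of_int (sign \<pi>) * X ((v \<circ> t) (\<pi> 0)) ((v \<circ> t) (\<pi> 1)) ((v \<circ> t) (\<pi> 2)) ((v \<circ> t) (\<pi> 3))))"
    using t by (intro arg_cong[where f = "\<lambda>x. 1/24 * x"] sum.cong refl)
      (simp add: sign_compose permutes_imp_permutation)
  also have "\<dots> = of_int (sign t) * alternation X (v \<circ> t)"
    by (simp add: alternation_def sum_distrib_left mult_ac)
  finally have "alternation X v = of_int (sign t) * alternation X (v \<circ> t)" .
  moreover have "of_int (sign t) * of_int (sign t) = (1::real)"
    by (simp flip: of_int_mult)
  ultimately show ?thesis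
    by (simp add: mult.assoc[symmetric])
qed

lemma piece4_swap_ab: "piece4 X b a c d = - piece4 X a b c d"
  unfolding piece4_eq_alternation slots_transpose(1)[where a=a and b=b and c=c and d=d]
  by (simp add: alternation_compose permutes_swap_id sign_swap_id)

lemma piece4_swap_cd: "piece4 X a b d c = - piece4 X a b c d"
  unfolding piece4_eq_alternation slots_transpose(3)[where a=a and b=b and c=c and d=d]
  by (simp add: alternation_compose permutes_swap_id sign_swap_id)

lemma piece4_swap_bd: "piece4 X a d c b = - piece4 X a b c d"
  unfolding piece4_eq_alternation slots_transpose(4)[where a=a and b=b and c=c and d=d]
  by (simp add: alternation_compose permutes_swap_id sign_swap_id)

lemma piece4_pair_swap: "piece4 X c d a b = piece4 X a b c d"
  unfolding piece4_eq_alternation slots_transpose(5)[where a=a and b=b and c=c and d=d]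
  by (simp add: alternation_compose permutes_swap_id sign_swap_id permutes_compose sign_compose
      permutation_swap_id)

lemma double_form_piece4: "double_form (piece4 X)"
  by (rule double_form_intro) (rule piece4_swap_ab, rule piece4_swap_cd)

lemma double_form_sym_part:
  assumes "double_form X"
  shows "double_form (sym_part X)"
proof (rule double_form_intro)
  fix a b c d
  show "sym_part X b a c d = - sym_part X a b c d"
    using double_form_swap_first[OF assms, of b a c d] double_form_swap_second[OF assms, of c d b a]
    by (simp add: sym_part_def field_simps)
  show "sym_part X a b d c = - sym_part X a b c d"
    using double_form_swap_second[OF assms, of a b d c] double_form_swap_first[OF assms, of d c a b]
    by (simp add: sym_part_def field_simps)
qed

lemma double_form_antisym_part:
  assumes "double_form X"
  shows "double_form (antisym_part X)"
proof (rule double_form_intro)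
  fix a b c d
  show "antisym_part X b a c d = - antisym_part X a b c d"
    using double_form_swap_first[OF assms, of b a c d] double_form_swap_second[OF assms, of c d b a]
    by (simp add: antisym_part_def field_simps)
  show "antisym_part X a b d c = - antisym_part X a b c d"
    using double_form_swap_second[OF assms, of a b d c] double_form_swap_first[OF assms, of d c a b]
    by (simp add: antisym_part_def field_simps)
qed

lemma piece3_eq_kn: "piece3 g X = kn g (\<lambda>a c. trace2 g (trace1 g X) / 12 * g$a$c)"
  by (intro ext) (simp add: piece3_def kn_def algebra_simps)

context lorentz_metric
begin

lemma trace1_piece4: "trace1 g (piece4 X) x y = 0"
  by (rule trace1_eq_0_if_antisym_bd) (rule piece4_swap_bd)

lemma trace1_pieceC: "trace1 g (pieceC X) x y = (trace1 g X x y + trace1 g X y x) / 2"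
  unfolding pieceC_def[abs_def] sym_part_def[abs_def]
  by (simp only: trace1_diff trace1_piece4 trace1_scale trace1_add trace1_pair_swap[of X])

lemma trace1_antisym_part: "trace1 g (antisym_part X) x y = (trace1 g X x y - trace1 g X y x) / 2"
  unfolding antisym_part_def[abs_def]
  by (simp only: trace1_scale trace1_diff trace1_pair_swap[of X])

lemma trace2_trace1_pieceC: "trace2 g (trace1 g (pieceC X)) = trace2 g (trace1 g X)"
proof -
  have "trace1 g (pieceC X) = (\<lambda>x y. 1/2 * (trace1 g X x y + trace1 g X y x))"
    by (intro ext) (simp add: trace1_pieceC)
  then show ?thesis
    by (simp only: trace2_scale trace2_add trace2_transpose[of "trace1 g X"]) simp
qed

lemma traceless_h_eq:
  "traceless_h g X = (\<lambda>a b. (trace1 g X a b + trace1 g X b a) / 2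
     - 1/4 * trace2 g (trace1 g X) * g$a$b)"
  by (intro ext) (simp add: traceless_h_def trace1_pieceC trace2_trace1_pieceC)

lemma traceless_h_sym: "(\<lambda>x y. traceless_h g X y x) = traceless_h g X"
  unfolding traceless_h_eq by (intro ext) (simp add: metric_sym algebra_simps)

lemma trace2_traceless_h: "trace2 g (traceless_h g X) = 0"
proof -
  have "trace2 g (traceless_h g X) = trace2 g (\<lambda>a b. 1/2 * (trace1 g X a b + trace1 g X b a))
      - trace2 g (\<lambda>a b. (1/4 * trace2 g (trace1 g X)) * g$a$b)"
    unfolding traceless_h_eq by (simp add: trace2_diff[symmetric])
  also have "\<dots> = 0"
    by (simp only: trace2_scale trace2_add trace2_transpose[of "trace1 g X"] trace2_metric) simp
  finally show ?thesis .
qed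

lemma trace1_antisym_part_transpose:
  "(\<lambda>x y. trace1 g (antisym_part X) y x) = (\<lambda>x y. - trace1 g (antisym_part X) x y)"
  by (intro ext) (simp add: trace1_antisym_part field_simps)

lemma trace2_trace1_antisym_part: "trace2 g (trace1 g (antisym_part X)) = 0"
  by (rule trace2_eq_0_if_antisym) (simp add: trace1_antisym_part field_simps)

lemma double_dual_piece1:
  assumes "double_form X"
  shows "double_dual g (piece1 g X) = (\<lambda>a b c d. - piece1 g X a b c d)"
proof (intro ext)
  fix a b c d
  let ?t = "trace2 g (trace1 g X)"
  have double_form: "double_form (piece1 g X)"
    unfolding piece1_def[abs_def] pieceC_def[abs_def] piece2_def piece3_eq_kn
    by (intro double_form_diff double_form_sym_part[OF assms] double_form_piece4 double_form_kn)
  have trace_free: "trace1 g (piece1 g X) x y = 0" for x y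
  proof -
    have "trace2 g (\<lambda>a c. ?t / 12 * g$a$c) = ?t / 12 * 4"
      by (simp only: trace2_scale trace2_metric)
    then show ?thesis
      unfolding piece1_def[abs_def] trace1_diff trace1_pieceC piece2_def piece3_eq_kn trace1_kn
        trace2_traceless_h
      unfolding traceless_h_eq by (simp add: algebra_simps)
  qed
  have "pieceC X c d a b = pieceC X a b c d"
    by (simp add: pieceC_def sym_part_def piece4_pair_swap[of X c d a b])
  moreover have "piece2 g X c d a b = piece2 g X a b c d"
    unfolding piece2_def kn_pair_swap[of "traceless_h g X" c d a b] traceless_h_sym ..
  moreover have "piece3 g X c d a b = piece3 g X a b c d"
    by (simp add: piece3_def metric_sym[of c a] metric_sym[of d b] metric_sym[of c b]
        metric_sym[of d a] algebra_simps)
  ultimately have "piece1 g X c d a b = piece1 g X a b c d"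
    by (simp add: piece1_def)
  then show "double_dual g (piece1 g X) a b c d = - piece1 g X a b c d"
    unfolding double_dual_trace_free[OF double_form trace_free] by simp
qed

lemma double_dual_piece2: "double_dual g (piece2 g X) = piece2 g X"
  by (intro ext) (simp add: piece2_def double_dual_kn traceless_h_sym trace2_traceless_h)

lemma double_dual_piece3: "double_dual g (piece3 g X) = (\<lambda>a b c d. - piece3 g X a b c d)"
proof (intro ext)
  fix a b c d
  let ?t = "trace2 g (trace1 g X)"
  have transpose: "(\<lambda>x y. ?t / 12 * g$y$x) = (\<lambda>x y. ?t / 12 * g$x$y)"
    by (intro ext) (metis metric_sym)
  have trace: "trace2 g (\<lambda>a c. ?t / 12 * g$a$c) = ?t / 12 * 4"
    by (simp only: trace2_scale trace2_metric)
  show "double_dual g (piece3 g X) a b c d = - piece3 g X a b c d"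
    unfolding piece3_eq_kn double_dual_kn transpose trace by (simp add: kn_def algebra_simps)
qed

lemma double_dual_piece4: "double_dual g (piece4 X) = (\<lambda>a b c d. - piece4 X a b c d)"
  by (intro ext) (simp add: double_dual_trace_free double_form_piece4 trace1_piece4 piece4_pair_swap)

lemma double_dual_piece5:
  assumes "double_form X"
  shows "double_dual g (piece5 g X) = piece5 g X"
proof (intro ext)
  fix a b c d
  have double_form: "double_form (piece5 g X)"
    unfolding piece5_def[abs_def] piece6_def
    by (rule double_form_diff[OF double_form_antisym_part[OF assms] double_form_kn])
  have trace_free: "trace1 g (piece5 g X) x y = 0" for x y
    unfolding piece5_def[abs_def] piece6_def trace1_diff trace1_kn trace2_trace1_antisym_part
    by simp
  have "piece6 g X c d a b = - piece6 g X a b c d"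
    unfolding piece6_def kn_pair_swap[of "trace1 g (antisym_part X)" c d a b]
      trace1_antisym_part_transpose
    by (simp add: kn_def algebra_simps)
  then have "piece5 g X c d a b = - piece5 g X a b c d"
    by (simp add: piece5_def antisym_part_def field_simps)
  then show "double_dual g (piece5 g X) a b c d = piece5 g X a b c d"
    unfolding double_dual_trace_free[OF double_form trace_free] by simp
qed

lemma double_dual_piece6: "double_dual g (piece6 g X) = (\<lambda>a b c d. - piece6 g X a b c d)"
  by (intro ext) (simp add: piece6_def double_dual_kn trace1_antisym_part_transpose
      trace2_trace1_antisym_part kn_def algebra_simps)

end

theorem mainTheorem4:
  fixes g :: "real^4^4" and X :: tensor4
  assumes "lorentzian g" and "double_form X"
  shows "double_dual g (piece1 g X) = (\<lambda>a b c d. - piece1 g X a b c d) \<and>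
         double_dual g (piece2 g X) = piece2 g X \<and>
         double_dual g (piece3 g X) = (\<lambda>a b c d. - piece3 g X a b c d) \<and>
         double_dual g (piece4 X) = (\<lambda>a b c d. - piece4 X a b c d) \<and>
         double_dual g (piece5 g X) = piece5 g X \<and>
         double_dual g (piece6 g X) = (\<lambda>a b c d. - piece6 g X a b c d)"
proof -
  interpret lorentz_metric g
    by (rule lorentz_metric.intro) (rule assms(1))
  show ?thesis
    using double_dual_piece1[OF assms(2)] double_dual_piece2 double_dual_piece3
      double_dual_piece4 double_dual_piece5[OF assms(2)] double_dual_piece6
    by blast
qed

end
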